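(* Let $c\ge2$, $q\in[0,c-1]$, and let $\Gamma$ be a $c$-uniform unoriented hypergraph with $E\ne\varnothing$ and no isolated vertices, with smallest normalized Laplacian eigenvalue $\lambda_1$ and with $\chi^{q\text{-t}}=\chi^{q\text{-t}}(\Gamma)\ge2$. If $\chi^{q\text{-t}}=\dfrac{c-\lambda_1}{q+1-\lambda_1}$, then for every $q$-tailored $\chi^{q\text{-t}}$-coloring with color classes $V_1,\dots,V_{\chi^{q\text{-t}}}$: for every $i$ and every $v\in V_i$, $\sum_{w\in V_i}|A_{v,w}|=q\deg v$; and for all distinct $i,j$, the function $g_{ij}$ is an eigenfunction of $L$ with eigenvalue \[ \lambda_1=\frac{(q+1)\chi^{q\text{-t}}-c}{\chi^{q\text{-t}}-1}. \]
   Context: A hypergraph has finite vertex set $V$ and edge set $E\subseteq\mathcal P(V)$; it is $c$-uniform if $|e|=c$ for all $e$, and unoriented means all incidences have orientation $+1$. $\deg v=|\{e\in E: v\in e\}|\ge1$, $D=\mathrm{diag}(\deg v)$, adjacency $A_{v,v}=0$ and $A_{v,w}=-|\{e\in E: v,w\in e\}|$ for $v\ne w$, normalized Laplacian $L=\mathrm{Id}-D^{-1}A$ with eigenvalues $\lambda_1\le\dots\le\lambda_N$. For $q\in[0,c-1]$, a $k$-coloring with color classes $V_1,\dots,V_k$ is $q$-tailored if for all $i$ and all $v\in V_i$, $\sum_{w\in V_i}|A_{v,w}|\le q\deg v$; $\chi^{q\text{-t}}$ is the least $k$ admitting one. For color classes and distinct $i,j$, $g_{ij}(w)=1$ if $w\in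 V_i$, $-1$ if $w\in V_j$, $0$ otherwise. *)

theory Defs
  imports Complex_Main
begin

(* A hypergraph is given by a vertex set V :: 'a set and an edge set E :: 'a set set.
   Unoriented: all incidences have orientation +1, so edges are just vertex sets. *)

definition hdeg :: "'a set set \<Rightarrow> 'a \<Rightarrow> nat" where
  "hdeg E v = card {e \<in> E. v \<in> e}"

definition hadj :: "'a set set \<Rightarrow> 'a \<Rightarrow> 'a \<Rightarrow> real" where
  "hadj E v w = (if v = w then 0 else - real (card {e \<in> E. v \<in> e \<and> w \<in> e}))"

definition nlap :: "'a set \<Rightarrow> 'a set set \<Rightarrow> ('a \<Rightarrow> real) \<Rightarrow> 'a \<Rightarrow> real" where
  "nlap V E f v = f v - (\<Sum>w\<in>V. hadj E v w * f w) / real (hdeg E v)"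

definition is_eigenfunction :: "'a set \<Rightarrow> 'a set set \<Rightarrow> ('a \<Rightarrow> real) \<Rightarrow> real \<Rightarrow> bool" where
  "is_eigenfunction V E f \<mu> \<longleftrightarrow> (\<exists>v\<in>V. f v \<noteq> 0) \<and> (\<forall>v\<in>V. nlap V E f v = \<mu> * f v)"

definition is_eigenvalue :: "'a set \<Rightarrow> 'a set set \<Rightarrow> real \<Rightarrow> bool" where
  "is_eigenvalue V E \<mu> \<longleftrightarrow> (\<exists>f. is_eigenfunction V E f \<mu>)"

(* smallest eigenvalue lambda_1 of L (all eigenvalues of L are real) *)
definition lambda1 :: "'a set \<Rightarrow> 'a set set \<Rightarrow> real" where
  "lambda1 V E = Min {\<mu>. is_eigenvalue V E \<mu>}"

definition is_coloring :: "'a set \<Rightarrow> nat \<Rightarrow> ('a \<Rightarrow> nat) \<Rightarrow> bool" where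
  "is_coloring V k col \<longleftrightarrow> (\<forall>v\<in>V. col v < k)"

definition color_class :: "'a set \<Rightarrow> ('a \<Rightarrow> nat) \<Rightarrow> nat \<Rightarrow> 'a set" where
  "color_class V col i = {v \<in> V. col v = i}"

definition q_tailored :: "'a set \<Rightarrow> 'a set set \<Rightarrow> real \<Rightarrow> nat \<Rightarrow> ('a \<Rightarrow> nat) \<Rightarrow> bool" where
  "q_tailored V E q k col \<longleftrightarrow> is_coloring V k col \<and>
     (\<forall>i<k. \<forall>v\<in>color_class V col i.
        (\<Sum>w\<in>color_class V col i. \<bar>hadj E v w\<bar>) \<le> q * real (hdeg E v))"

definition chi_qt :: "'a set \<Rightarrow> 'a set set \<Rightarrow> real \<Rightarrow> nat" where
  "chi_qt V E q = (LEAST k. \<exists>col. q_tailored V E q k col)"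

definition gfun :: "'a set \<Rightarrow> ('a \<Rightarrow> nat) \<Rightarrow> nat \<Rightarrow> nat \<Rightarrow> 'a \<Rightarrow> real" where
  "gfun V col i j w = (if w \<in> color_class V col i then 1
                       else if w \<in> color_class V col j then -1 else 0)"

end

theory Submission
  imports Defs "HOL-Analysis.Analysis" "Jordan_Normal_Form.Char_Poly"
begin

(*
  With W v w the number of edges containing both v and w (so W v v = deg v), one has
  D - A = W and L = D^-1 W, and the quadratic forms of W and D are
    Q f = sum over edges e of (sum_{v in e} f v)^2   and   N f = sum_v deg v * (f v)^2.
  The Rayleigh quotient Q/N attains its minimum (compactness); a minimiser is an eigenfunction,
  so lambda_1 * N f <= Q f for every f, with equality only for lambda_1-eigenfunctions.

  For a q-tailored k-colouring with class indicators X_i, let s v be the weight of v inside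
  its own class. Summing over all pairs (i, j) gives
    sum (Q - lambda_1 N)(X_i - X_j) + 2k * sum_v (q deg v - s v)
      = 2 (k (q + 1) - c - lambda_1 (k - 1)) * sum_v deg v,
  and both terms on the left are nonnegative. If k = (c - lambda_1) / (q + 1 - lambda_1), the
  right-hand side vanishes, so s v = q deg v everywhere and every X_i - X_j = g_ij attains the
  Rayleigh minimum. For k = chi^{q-t} no class is empty, so g_ij is a nonzero eigenfunction.
*)

lemma linear_term_zero_if_quadratic_nonneg:
  fixes a b :: real
  assumes "\<And>t. 0 \<le> 2 * t * b + t\<^sup>2 * a"
  shows "b = 0"
proof -
  define s where "s = \<bar>a\<bar> + 1"
  have s: "s > 0" "a - 2 * s < 0" by (auto simp: s_def abs_if)
  have "0 \<le> s\<^sup>2 * (2 * (- b / s) * b + (- b / s)\<^sup>2 * a)"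
    using assms[of "- b / s"] by simp
  also have "\<dots> = b\<^sup>2 * (a - 2 * s)"
    using s by (simp add: field_simps power2_eq_square)
  finally have "0 \<le> b\<^sup>2 * (a - 2 * s)" .
  with s show ?thesis by (auto simp: zero_le_mult_iff)
qed

lemma psd_form_zero_imp_null:
  fixes K :: "'a \<Rightarrow> 'a \<Rightarrow> real"
  assumes "finite V" and sym: "\<And>v w. K v w = K w v"
    and psd: "\<And>f. 0 \<le> (\<Sum>v\<in>V. \<Sum>w\<in>V. K v w * f v * f w)"
    and zero: "(\<Sum>v\<in>V. \<Sum>w\<in>V. K v w * g v * g w) = 0"
    and "u \<in> V"
  shows "(\<Sum>w\<in>V. K u w * g w) = 0"
proof (rule linear_term_zero_if_quadratic_nonneg)
  fix t :: real
  define b where "b = (\<Sum>w\<in>V. K u w * g w)"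
  let ?f = "\<lambda>v. g v + t * (if v = u then 1 else 0)"
  have "K v w * ?f v * ?f w = K v w * g v * g w + t * (if v = u then K u w * g w else 0)
          + t * (if w = u then K v u * g v else 0) + t\<^sup>2 * (if v = u then if w = u then K u u else 0 else 0)" for v w
    by (simp add: algebra_simps power2_eq_square)
  then have "(\<Sum>v\<in>V. \<Sum>w\<in>V. K v w * ?f v * ?f w)
      = (\<Sum>v\<in>V. \<Sum>w\<in>V. K v w * g v * g w) + t * (\<Sum>v\<in>V. \<Sum>w\<in>V. if v = u then K u w * g w else 0)
        + t * (\<Sum>v\<in>V. \<Sum>w\<in>V. if w = u then K v u * g v else 0)
        + t\<^sup>2 * (\<Sum>v\<in>V. \<Sum>w\<in>V. if v = u then if w = u then K u u else 0 else 0)"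
    by (simp add: sum.distrib sum_distrib_left)
  also have "\<dots> = 2 * t * b + t\<^sup>2 * K u u"
  proof -
    have "(\<Sum>v\<in>V. K v u * g v) = b" unfolding b_def by (metis sym)
    moreover have "(\<Sum>w\<in>V. if v = u then F w else 0) = (if v = u then sum F V else 0)" for v and F :: "'a \<Rightarrow> real"
      by simp
    ultimately show ?thesis
      using assms(1,5) zero by (simp add: b_def sum.delta)
  qed
  finally show "0 \<le> 2 * t * b + t\<^sup>2 * K u u"
    using psd[of ?f] by simp
qed

lemma sum_sum_diff_sq:
  fixes a :: "'i \<Rightarrow> real"
  shows "(\<Sum>i\<in>I. \<Sum>j\<in>I. (a i - a j)\<^sup>2) = 2 * real (card I) * (\<Sum>i\<in>I. (a i)\<^sup>2) - 2 * (\<Sum>i\<in>I. a i)\<^sup>2"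
proof -
  have "(\<Sum>i\<in>I. \<Sum>j\<in>I. (a i - a j)\<^sup>2)
      = (\<Sum>i\<in>I. real (card I) * (a i)\<^sup>2 + (\<Sum>j\<in>I. (a j)\<^sup>2) - 2 * a i * (\<Sum>j\<in>I. a j))"
    by (simp add: power2_diff sum.distrib sum_subtractf sum_distrib_left mult.assoc)
  also have "\<dots> = 2 * real (card I) * (\<Sum>i\<in>I. (a i)\<^sup>2) - 2 * (\<Sum>i\<in>I. a i)\<^sup>2"
    by (simp add: sum.distrib sum_subtractf sum_distrib_left[symmetric] sum_distrib_right[symmetric]
        power2_eq_square)
  finally show ?thesis .
qed

lemma hoffman_bound_tight_if_ratio:
  fixes k c q lam :: real
  assumes "k \<ge> 2" and "q \<le> c - 1" and bound: "lam * (k - 1) \<le> k * (q + 1) - c"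
    and ratio: "k = (c - lam) / (q + 1 - lam)"
  shows "lam * (k - 1) = k * (q + 1) - c"
proof -
  have "q + 1 - lam > 0"
  proof (rule ccontr)
    assume "\<not> q + 1 - lam > 0"
    moreover have "q + 1 - lam \<noteq> 0" using ratio \<open>k \<ge> 2\<close> by auto
    ultimately have "(q + 1) * (k - 1) < lam * (k - 1)"
      using \<open>k \<ge> 2\<close> by (intro mult_strict_right_mono) auto
    with bound \<open>q \<le> c - 1\<close> show False by (simp add: algebra_simps)
  qed
  with ratio show ?thesis by (simp add: field_simps)
qed

locale uniform_hypergraph =
  fixes V :: "'a set" and E :: "'a set set" and c :: nat
  assumes finite_V: "finite V"
    and edges: "\<And>e. e \<in> E \<Longrightarrow> e \<subseteq> V \<and> card e = c"
    and hdeg_pos: "\<And>v. v \<in> V \<Longrightarrow> hdeg E v \<ge> 1"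
begin

definition codeg :: "'a \<Rightarrow> 'a \<Rightarrow> real" where
  "codeg v w = real (card {e \<in> E. v \<in> e \<and> w \<in> e})"

definition edge_form :: "('a \<Rightarrow> real) \<Rightarrow> real" where
  "edge_form f = (\<Sum>e\<in>E. (\<Sum>v\<in>e. f v)\<^sup>2)"

definition degree_form :: "('a \<Rightarrow> real) \<Rightarrow> real" where
  "degree_form f = (\<Sum>v\<in>V. real (hdeg E v) * (f v)\<^sup>2)"

lemma finite_E: "finite E"
  using finite_subset[of E "Pow V"] edges finite_V by auto

lemma codeg_commute: "codeg v w = codeg w v"
  unfolding codeg_def by (simp add: conj_commute)

lemma codeg_self: "codeg v v = real (hdeg E v)"
  unfolding codeg_def hdeg_def by simp

lemma hadj_eq_neg_codeg: "v \<noteq> w \<Longrightarrow> hadj E v w = - codeg v w"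
  unfolding hadj_def codeg_def by simp

lemma sum_edge_eq:
  assumes "e \<in> E"
  shows "(\<Sum>v\<in>e. f v) = (\<Sum>v\<in>V. if v \<in> e then f v else 0)"
proof -
  have "{v \<in> V. v \<in> e} = e" using edges[OF assms] by auto
  then show ?thesis using sum.inter_filter[OF finite_V, of f "\<lambda>v. v \<in> e"] by simp
qed

lemma edge_form_eq_codeg_form: "edge_form f = (\<Sum>v\<in>V. \<Sum>w\<in>V. codeg v w * f v * f w)"
proof -
  have "edge_form f = (\<Sum>e\<in>E. \<Sum>v\<in>V. \<Sum>w\<in>V. if v \<in> e \<and> w \<in> e then f v * f w else 0)"
    unfolding edge_form_def power2_eq_square
    by (intro sum.cong refl) (auto simp: sum_edge_eq sum_product intro!: sum.cong)
  also have "\<dots> = (\<Sum>v\<in>V. \<Sum>w\<in>V. \<Sum>e\<in>E. if v \<in> e \<and> w \<in> e then f v * f w else 0)"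
    by (subst sum.swap) (simp add: sum.swap[of _ E])
  also have "\<dots> = (\<Sum>v\<in>V. \<Sum>w\<in>V. codeg v w * f v * f w)"
    unfolding codeg_def using finite_E by (simp add: sum.inter_filter[symmetric] mult.assoc)
  finally show ?thesis .
qed

lemma edge_form_nonneg: "0 \<le> edge_form f"
  unfolding edge_form_def by (simp add: sum_nonneg)

lemma degree_form_nonneg: "0 \<le> degree_form f"
  unfolding degree_form_def by (simp add: sum_nonneg)

lemma degree_form_pos:
  assumes "v \<in> V" and "f v \<noteq> 0"
  shows "0 < degree_form f"
  unfolding degree_form_def using assms finite_V hdeg_pos[OF assms(1)]
  by (intro sum_pos2[of _ v]) auto

lemma hdeg_mult_nlap:
  assumes "v \<in> V"
  shows "real (hdeg E v) * nlap V E f v = (\<Sum>w\<in>V. codeg v w * f w)"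
proof -
  have "(\<Sum>w\<in>V - {v}. hadj E v w * f w) = - (\<Sum>w\<in>V - {v}. codeg v w * f w)"
    by (subst sum_negf[symmetric], intro sum.cong) (auto simp: hadj_eq_neg_codeg)
  then have "(\<Sum>w\<in>V. codeg v w * f w) = real (hdeg E v) * f v - (\<Sum>w\<in>V. hadj E v w * f w)"
    using sum.remove[OF finite_V assms, of "\<lambda>w. codeg v w * f w"]
      sum.remove[OF finite_V assms, of "\<lambda>w. hadj E v w * f w"]
    by (simp add: codeg_self hadj_def[of E v v])
  moreover have "real (hdeg E v) \<noteq> 0" using hdeg_pos[OF assms] by simp
  ultimately show ?thesis
    by (simp add: nlap_def right_diff_distrib)
qed

lemma nlap_eq_if_rayleigh_minimal:
  assumes min: "\<And>h. \<mu> * degree_form h \<le> edge_form h"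
    and eq: "\<mu> * degree_form g = edge_form g" and "v \<in> V"
  shows "nlap V E g v = \<mu> * g v"
proof -
  define K where "K v w = codeg v w - (if v = w then \<mu> * real (hdeg E v) else 0)" for v w
  have delta_mult: "(if v = w then d else 0) * y = (if v = w then d * y else 0)" for v w :: 'a and d y :: real
    by simp
  have K_form: "(\<Sum>v\<in>V. \<Sum>w\<in>V. K v w * f v * f w) = edge_form f - \<mu> * degree_form f" for f
    unfolding K_def edge_form_eq_codeg_form degree_form_def using finite_V
    by (simp add: delta_mult left_diff_distrib sum_subtractf sum_distrib_left power2_eq_square mult.assoc)
  have K_sym: "K u w = K w u" for u w
    by (simp add: K_def codeg_commute)
  have "(\<Sum>w\<in>V. K v w * g w) = 0"
    by (rule psd_form_zero_imp_null[OF finite_V K_sym]) (use min eq \<open>v \<in> V\<close> in \<open>simp_all add: K_form\<close>)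
  then have "(\<Sum>w\<in>V. codeg v w * g w) = real (hdeg E v) * (\<mu> * g v)"
    unfolding K_def using finite_V \<open>v \<in> V\<close>
    by (simp add: delta_mult left_diff_distrib sum_subtractf)
  with hdeg_mult_nlap[OF \<open>v \<in> V\<close>, of g] hdeg_pos[OF \<open>v \<in> V\<close>] show ?thesis
    by simp
qed

(* Needed because lambda1 is a Min, which says nothing about infinite sets. *)
lemma finite_eigenvalues: "finite {\<mu>. is_eigenvalue V E \<mu>}"
proof -
  define n where "n = card V"
  obtain \<sigma> where \<sigma>: "bij_betw \<sigma> {0..<n} V"
    using ex_bij_betw_nat_finite[OF finite_V] n_def by blast
  define A :: "real mat" where
    "A = mat n n (\<lambda>(i, j). of_bool (i = j) - hadj E (\<sigma> i) (\<sigma> j) / real (hdeg E (\<sigma> i)))"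
  have A: "A \<in> carrier_mat n n" by (simp add: A_def)
  have "eigenvalue A \<mu>" if ev: "is_eigenfunction V E f \<mu>" for f \<mu>
  proof -
    define x where "x = vec n (\<lambda>i. f (\<sigma> i))"
    obtain v where "v \<in> V" "f v \<noteq> 0" using ev by (auto simp: is_eigenfunction_def)
    then obtain i where "i < n" "x $ i \<noteq> 0"
      using \<sigma> unfolding bij_betw_def x_def by auto
    then have "x \<noteq> 0\<^sub>v n" by auto
    moreover have "A *\<^sub>v x = \<mu> \<cdot>\<^sub>v x"
    proof (rule eq_vecI)
      fix i assume "i < dim_vec (\<mu> \<cdot>\<^sub>v x)"
      then have i: "i < n" by (simp add: x_def)
      then have "\<sigma> i \<in> V" using \<sigma> unfolding bij_betw_def by auto
      have "(A *\<^sub>v x) $ i = (\<Sum>j = 0..<n. (of_bool (i = j) - hadj E (\<sigma> i) (\<sigma> j) / real (hdeg E (\<sigma> i))) * f (\<sigma> j))"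
        using A i by (simp add: A_def x_def scalar_prod_def)
      also have "\<dots> = f (\<sigma> i) - (\<Sum>j = 0..<n. hadj E (\<sigma> i) (\<sigma> j) * f (\<sigma> j)) / real (hdeg E (\<sigma> i))"
        using i by (simp add: left_diff_distrib sum_subtractf sum_divide_distrib)
      also have "(\<Sum>j = 0..<n. hadj E (\<sigma> i) (\<sigma> j) * f (\<sigma> j)) = (\<Sum>w\<in>V. hadj E (\<sigma> i) w * f w)"
        using sum.reindex_bij_betw[OF \<sigma>] by simp
      also have "f (\<sigma> i) - (\<Sum>w\<in>V. hadj E (\<sigma> i) w * f w) / real (hdeg E (\<sigma> i)) = \<mu> * f (\<sigma> i)"
        using ev \<open>\<sigma> i \<in> V\<close> by (simp add: is_eigenfunction_def nlap_def)
      finally show "(A *\<^sub>v x) $ i = (\<mu> \<cdot>\<^sub>v x) $ i" using i by (simp add: x_def)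
    qed (simp add: A_def x_def)
    moreover have "x \<in> carrier_vec n" by (simp add: x_def)
    ultimately show ?thesis
      using A unfolding eigenvalue_def eigenvector_def by auto
  qed
  then have "{\<mu>. is_eigenvalue V E \<mu>} \<subseteq> {\<mu>. poly (char_poly A) \<mu> = 0}"
    using eigenvalue_root_char_poly[OF A] by (auto simp: is_eigenvalue_def)
  moreover have "char_poly A \<noteq> 0" using degree_monic_char_poly[OF A] by auto
  ultimately show ?thesis using poly_roots_finite finite_subset by blast
qed

lemma edge_form_cong: "(\<And>v. v \<in> V \<Longrightarrow> f v = g v) \<Longrightarrow> edge_form f = edge_form g"
  unfolding edge_form_def using edges by (intro sum.cong refl arg_cong[where f = "\<lambda>x. x\<^sup>2"]) auto

lemma abs_le_1_if_degree_form_eq_1: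
  assumes "degree_form f = 1" and "v \<in> V"
  shows "\<bar>f v\<bar> \<le> 1"
proof -
  have "1 * (f v)\<^sup>2 \<le> real (hdeg E v) * (f v)\<^sup>2"
    using hdeg_pos[OF \<open>v \<in> V\<close>] by (intro mult_right_mono) auto
  also have "\<dots> \<le> degree_form f"
    unfolding degree_form_def using finite_V \<open>v \<in> V\<close> by (intro member_le_sum) auto
  finally show ?thesis using assms(1) by (simp add: abs_square_le_1)
qed

lemma compact_bounded_degree_sphere:
  "compact ((\<Pi>\<^sub>E v\<in>UNIV. if v \<in> V then {-1..1} else {0}) \<inter> {f. degree_form f = 1})"
proof -
  have "compactin (product_topology (\<lambda>_. euclidean) UNIV) (\<Pi>\<^sub>E v\<in>UNIV. if v \<in> V then {-1..1::real} else {0})"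
    unfolding compactin_PiE by (auto simp: compactin_euclidean_iff)
  moreover have "continuous_on UNIV degree_form"
    unfolding degree_form_def by (intro continuous_intros continuous_on_product_coordinates)
  ultimately show ?thesis
    unfolding euclidean_product_topology compactin_euclidean_iff
    by (intro compact_Int_closed closed_Collect_eq continuous_on_const) auto
qed

lemma rayleigh_minimizer_exists:
  assumes "V \<noteq> {}"
  obtains f\<^sub>0 where "degree_form f\<^sub>0 = 1" and "\<And>h. edge_form f\<^sub>0 * degree_form h \<le> edge_form h"
proof -
  define S where "S = (\<Pi>\<^sub>E v\<in>UNIV. if v \<in> V then {-1..1} else {0}) \<inter> {f. degree_form f = 1}"
  define normalize where "normalize h v = (if v \<in> V then h v / sqrt (degree_form h) else 0)" for h v
  have normalize: "normalize h \<in> S \<and> edge_form (normalize h) = edge_form h / degree_form h"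
    if "degree_form h > 0" for h
  proof -
    have normalized: "degree_form (normalize h) = 1"
      using that unfolding degree_form_def normalize_def
      by (simp add: power_divide sum_divide_distrib[symmetric])
    have "normalize h v \<in> {-1..1}" if "v \<in> V" for v
      using abs_le_1_if_degree_form_eq_1[OF normalized that] abs_le_iff[of "normalize h v" 1]
      unfolding atLeastAtMost_iff by linarith
    then have "normalize h \<in> (\<Pi>\<^sub>E v\<in>UNIV. if v \<in> V then {-1..1} else {0})"
      by (auto simp: normalize_def[of h])
    moreover have "edge_form (normalize h) = edge_form h / degree_form h"
      using that edge_form_cong[of "normalize h" "\<lambda>v. h v / sqrt (degree_form h)"]
      unfolding normalize_def by (simp add: edge_form_def power_divide sum_divide_distrib[symmetric])
    ultimately show ?thesis
      using normalized by (simp add: S_def)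
  qed
  have compact: "compact S"
    unfolding S_def by (rule compact_bounded_degree_sphere)
  obtain v where "v \<in> V" using assms by auto
  then have "normalize (\<lambda>_. 1) \<in> S"
    using normalize degree_form_pos[of v "\<lambda>_. 1"] by simp
  then have nonempty: "S \<noteq> {}" by auto
  have "continuous_on UNIV edge_form"
    unfolding edge_form_def by (intro continuous_intros continuous_on_product_coordinates)
  then have "continuous_on S edge_form" by (rule continuous_on_subset) simp
  then obtain f\<^sub>0 where "f\<^sub>0 \<in> S" and min: "\<And>f. f \<in> S \<Longrightarrow> edge_form f\<^sub>0 \<le> edge_form f"
    using continuous_attains_inf[OF compact nonempty] by blast
  have "edge_form f\<^sub>0 * degree_form h \<le> edge_form h" for h
  proof (cases "degree_form h = 0")
    case True then show ?thesis using edge_form_nonneg[of h] by simp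
  next
    case False
    then have "degree_form h > 0" using degree_form_nonneg[of h] by simp
    with normalize[OF this] min[of "normalize h"] show ?thesis by (simp add: le_divide_eq)
  qed
  moreover have "degree_form f\<^sub>0 = 1" using \<open>f\<^sub>0 \<in> S\<close> by (simp add: S_def)
  ultimately show ?thesis using that by blast
qed

lemma lambda1_mult_degree_form_le:
  assumes "V \<noteq> {}"
  shows "lambda1 V E * degree_form g \<le> edge_form g"
proof -
  obtain f\<^sub>0 where f\<^sub>0: "degree_form f\<^sub>0 = 1" and min: "\<And>h. edge_form f\<^sub>0 * degree_form h \<le> edge_form h"
    using rayleigh_minimizer_exists[OF assms] by blast
  have "\<exists>v\<in>V. f\<^sub>0 v \<noteq> 0"
  proof (rule ccontr)
    assume "\<not> (\<exists>v\<in>V. f\<^sub>0 v \<noteq> 0)"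
    then have "degree_form f\<^sub>0 = 0" by (simp add: degree_form_def)
    with f\<^sub>0 show False by simp
  qed
  moreover have "\<forall>v\<in>V. nlap V E f\<^sub>0 v = edge_form f\<^sub>0 * f\<^sub>0 v"
    using nlap_eq_if_rayleigh_minimal[of "edge_form f\<^sub>0" f\<^sub>0] min f\<^sub>0 by simp
  ultimately have "is_eigenvalue V E (edge_form f\<^sub>0)"
    by (auto simp: is_eigenvalue_def is_eigenfunction_def)
  then have "lambda1 V E \<le> edge_form f\<^sub>0"
    unfolding lambda1_def using finite_eigenvalues by (simp add: Min_le)
  then have "lambda1 V E * degree_form g \<le> edge_form f\<^sub>0 * degree_form g"
    using degree_form_nonneg by (simp add: mult_right_mono)
  also have "\<dots> \<le> edge_form g" by (rule min)
  finally show ?thesis .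
qed

lemma sum_hdeg_eq: "(\<Sum>v\<in>V. real (hdeg E v)) = real c * real (card E)"
proof -
  have "(\<Sum>v\<in>V. real (hdeg E v)) = (\<Sum>v\<in>V. \<Sum>e\<in>E. if v \<in> e then 1 else 0)"
    unfolding hdeg_def using finite_E by (simp add: sum.inter_filter[symmetric])
  also have "\<dots> = (\<Sum>e\<in>E. \<Sum>v\<in>V. if v \<in> e then 1 else 0)"
    by (rule sum.swap)
  also have "\<dots> = (\<Sum>e\<in>E. real c)"
    using edges by (intro sum.cong refl) (simp add: sum_edge_eq[symmetric])
  finally show ?thesis by simp
qed

definition own_class_weight :: "('a \<Rightarrow> nat) \<Rightarrow> 'a \<Rightarrow> real" where
  "own_class_weight cl v = (\<Sum>w\<in>color_class V cl (cl v). \<bar>hadj E v w\<bar>)"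

lemma finite_color_class: "finite (color_class V cl i)"
  using finite_V by (simp add: color_class_def)

lemma sum_codeg_eq:
  assumes "finite A" and "v \<in> A"
  shows "(\<Sum>w\<in>A. codeg v w) = real (hdeg E v) + (\<Sum>w\<in>A. \<bar>hadj E v w\<bar>)"
proof -
  have "(\<Sum>w\<in>A - {v}. codeg v w) = (\<Sum>w\<in>A - {v}. \<bar>hadj E v w\<bar>)"
    by (intro sum.cong) (auto simp: hadj_eq_neg_codeg codeg_def)
  then show ?thesis
    using sum.remove[OF assms, of "codeg v"] sum.remove[OF assms, of "\<lambda>w. \<bar>hadj E v w\<bar>"]
    by (simp add: codeg_self hadj_def)
qed

lemma edge_form_class_indicator:
  "edge_form (indicator (color_class V cl i)) = (\<Sum>v\<in>color_class V cl i. real (hdeg E v) + own_class_weight cl v)"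
proof -
  let ?C = "color_class V cl i"
  have sub: "{v \<in> V. v \<in> ?C} = ?C" by (auto simp: color_class_def)
  have "edge_form (indicator ?C) = (\<Sum>v\<in>V. indicator ?C v * (\<Sum>w\<in>V. codeg v w * indicator ?C w))"
    unfolding edge_form_eq_codeg_form by (simp add: sum_distrib_left ac_simps)
  also have "\<dots> = (\<Sum>v\<in>?C. \<Sum>w\<in>?C. codeg v w)"
    using finite_V by (simp add: sub)
  also have "\<dots> = (\<Sum>v\<in>?C. real (hdeg E v) + own_class_weight cl v)"
  proof (intro sum.cong refl)
    fix v assume "v \<in> ?C"
    then have "cl v = i" by (simp add: color_class_def)
    with \<open>v \<in> ?C\<close> show "(\<Sum>w\<in>?C. codeg v w) = real (hdeg E v) + own_class_weight cl v"
      by (simp add: sum_codeg_eq finite_color_class own_class_weight_def)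
  qed
  finally show ?thesis .
qed

lemma sum_class_indicators:
  assumes "is_coloring V k cl" and "v \<in> V"
  shows "(\<Sum>i<k. indicator (color_class V cl i) v) = (1::real)"
proof -
  have "(\<Sum>i<k. indicator (color_class V cl i) v) = (\<Sum>i<k. if i = cl v then 1 else 0 :: real)"
    using \<open>v \<in> V\<close> by (intro sum.cong) (auto simp: color_class_def)
  then show ?thesis using assms by (simp add: is_coloring_def)
qed

lemma sum_edge_form_class_indicators:
  assumes "is_coloring V k cl"
  shows "(\<Sum>i<k. edge_form (indicator (color_class V cl i))) = (\<Sum>v\<in>V. real (hdeg E v) + own_class_weight cl v)"
  using sum.group[OF finite_V finite_lessThan[of k], where g = cl and h = "\<lambda>v. real (hdeg E v) + own_class_weight cl v"] assms
  unfolding edge_form_class_indicator by (auto simp: color_class_def is_coloring_def)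

lemma sum_edge_form_class_diffs:
  assumes "is_coloring V k cl"
  defines "X \<equiv> \<lambda>i. indicator (color_class V cl i) :: 'a \<Rightarrow> real"
  shows "(\<Sum>i<k. \<Sum>j<k. edge_form (\<lambda>v. X i v - X j v))
           = 2 * real k * (\<Sum>i<k. edge_form (X i)) - 2 * (real c)\<^sup>2 * real (card E)"
proof -
  define n where "n i e = (\<Sum>v\<in>e. X i v)" for i e
  have "(\<Sum>i<k. n i e) = real c" if "e \<in> E" for e
  proof -
    have "(\<Sum>i<k. n i e) = (\<Sum>v\<in>e. \<Sum>i<k. X i v)" unfolding n_def by (rule sum.swap)
    also have "\<dots> = (\<Sum>v\<in>e. 1)"
      using edges[OF that] sum_class_indicators[OF assms(1)] by (intro sum.cong) (auto simp: X_def)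
    finally show ?thesis using edges[OF that] by simp
  qed
  then have "(\<Sum>i<k. \<Sum>j<k. edge_form (\<lambda>v. X i v - X j v))
      = (\<Sum>e\<in>E. 2 * real k * (\<Sum>i<k. (n i e)\<^sup>2) - 2 * (real c)\<^sup>2)"
    unfolding edge_form_def n_def[symmetric] sum_subtractf
    by (subst sum.swap, simp add: sum.swap[of _ E] sum_sum_diff_sq sum_subtractf)
  also have "\<dots> = 2 * real k * (\<Sum>i<k. edge_form (X i)) - 2 * (real c)\<^sup>2 * real (card E)"
    unfolding edge_form_def n_def by (simp add: sum_subtractf sum_distrib_left sum.swap[of _ E])
  finally show ?thesis .
qed

lemma sum_degree_form_class_diffs:
  assumes "is_coloring V k cl"
  defines "X \<equiv> \<lambda>i. indicator (color_class V cl i) :: 'a \<Rightarrow> real"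
  shows "(\<Sum>i<k. \<Sum>j<k. degree_form (\<lambda>v. X i v - X j v)) = 2 * (real k - 1) * (\<Sum>v\<in>V. real (hdeg E v))"
proof -
  have "(\<Sum>i<k. \<Sum>j<k. degree_form (\<lambda>v. X i v - X j v))
      = (\<Sum>v\<in>V. real (hdeg E v) * (\<Sum>i<k. \<Sum>j<k. (X i v - X j v)\<^sup>2))"
    unfolding degree_form_def by (simp add: sum_distrib_left sum.swap[of _ V])
  also have "\<dots> = (\<Sum>v\<in>V. real (hdeg E v) * (2 * real k - 2))"
  proof (intro sum.cong refl)
    fix v assume "v \<in> V"
    have "(X i v)\<^sup>2 = X i v" for i by (simp add: X_def indicator_def)
    then show "real (hdeg E v) * (\<Sum>i<k. \<Sum>j<k. (X i v - X j v)\<^sup>2) = real (hdeg E v) * (2 * real k - 2)"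
      using sum_class_indicators[OF assms(1) \<open>v \<in> V\<close>] by (simp add: sum_sum_diff_sq X_def)
  qed
  also have "\<dots> = (\<Sum>v\<in>V. real (hdeg E v)) * (2 * real k - 2)"
    by (rule sum_distrib_right[symmetric])
  finally show ?thesis by (simp add: algebra_simps)
qed

lemma rayleigh_defect_identity:
  assumes "is_coloring V k cl"
  defines "X \<equiv> \<lambda>i. indicator (color_class V cl i) :: 'a \<Rightarrow> real"
  shows "(\<Sum>i<k. \<Sum>j<k. edge_form (\<lambda>v. X i v - X j v) - \<mu> * degree_form (\<lambda>v. X i v - X j v))
           + 2 * real k * (\<Sum>v\<in>V. q * real (hdeg E v) - own_class_weight cl v)
         = 2 * (real k * (q + 1) - real c - \<mu> * (real k - 1)) * (\<Sum>v\<in>V. real (hdeg E v))"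
proof -
  define D where "D = (\<Sum>v\<in>V. real (hdeg E v))"
  define Inner where "Inner = (\<Sum>v\<in>V. own_class_weight cl v)"
  have split: "(\<Sum>i<k. \<Sum>j<k. edge_form (\<lambda>v. X i v - X j v) - \<mu> * degree_form (\<lambda>v. X i v - X j v))
      = (\<Sum>i<k. \<Sum>j<k. edge_form (\<lambda>v. X i v - X j v)) - \<mu> * (\<Sum>i<k. \<Sum>j<k. degree_form (\<lambda>v. X i v - X j v))"
    by (simp add: sum_subtractf sum_distrib_left)
  have edge: "(\<Sum>i<k. \<Sum>j<k. edge_form (\<lambda>v. X i v - X j v)) = 2 * real k * (D + Inner) - 2 * real c * D"
    using sum_edge_form_class_diffs[OF assms(1)] sum_edge_form_class_indicators[OF assms(1)]
    by (simp add: X_def D_def Inner_def sum.distrib sum_hdeg_eq power2_eq_square)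
  have degree: "(\<Sum>i<k. \<Sum>j<k. degree_form (\<lambda>v. X i v - X j v)) = 2 * (real k - 1) * D"
    using sum_degree_form_class_diffs[OF assms(1)] by (simp add: X_def D_def)
  have slack: "(\<Sum>v\<in>V. q * real (hdeg E v) - own_class_weight cl v) = q * D - Inner"
    by (simp add: D_def Inner_def sum_subtractf sum_distrib_left)
  show ?thesis
    unfolding split edge degree slack D_def[symmetric] by (simp add: algebra_simps)
qed

lemma tailored_coloring_tight:
  assumes tailored: "q_tailored V E q k cl" and "V \<noteq> {}" and "k \<ge> 2" and "q \<le> real c - 1"
    and ratio: "real k = (real c - lambda1 V E) / (q + 1 - lambda1 V E)"
  defines "X \<equiv> \<lambda>i. indicator (color_class V cl i) :: 'a \<Rightarrow> real"
  shows "lambda1 V E * (real k - 1) = real k * (q + 1) - real c"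
    and "\<And>v. v \<in> V \<Longrightarrow> own_class_weight cl v = q * real (hdeg E v)"
    and "\<And>i j. i < k \<Longrightarrow> j < k \<Longrightarrow>
           lambda1 V E * degree_form (\<lambda>v. X i v - X j v) = edge_form (\<lambda>v. X i v - X j v)"
proof -
  let ?l = "lambda1 V E"
  define F where "F i j = edge_form (\<lambda>v. X i v - X j v) - ?l * degree_form (\<lambda>v. X i v - X j v)" for i j
  define S where "S v = q * real (hdeg E v) - own_class_weight cl v" for v
  have coloring: "is_coloring V k cl" using tailored by (simp add: q_tailored_def)
  have F_nonneg: "F i j \<ge> 0" for i j
    using lambda1_mult_degree_form_le[OF \<open>V \<noteq> {}\<close>] by (simp add: F_def)
  have S_nonneg: "S v \<ge> 0" if "v \<in> V" for v
    using tailored that by (auto simp: S_def own_class_weight_def q_tailored_def is_coloring_def color_class_def)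
  have D_pos: "(\<Sum>v\<in>V. real (hdeg E v)) > 0"
    using \<open>V \<noteq> {}\<close> finite_V hdeg_pos by (intro sum_pos) fastforce+
  have identity: "(\<Sum>i<k. \<Sum>j<k. F i j) + 2 * real k * (\<Sum>v\<in>V. S v)
      = 2 * (real k * (q + 1) - real c - ?l * (real k - 1)) * (\<Sum>v\<in>V. real (hdeg E v))"
    using rayleigh_defect_identity[OF coloring, of ?l q] by (simp add: F_def S_def X_def)
  have F_sum: "(\<Sum>i<k. \<Sum>j<k. F i j) \<ge> 0" and S_sum: "2 * real k * (\<Sum>v\<in>V. S v) \<ge> 0"
    using F_nonneg S_nonneg by (auto intro!: sum_nonneg mult_nonneg_nonneg)
  then have "0 \<le> (real k * (q + 1) - real c - ?l * (real k - 1)) * (\<Sum>v\<in>V. real (hdeg E v))"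
    using identity by linarith
  with D_pos have "?l * (real k - 1) \<le> real k * (q + 1) - real c"
    by (simp add: zero_le_mult_iff)
  then show tight: "?l * (real k - 1) = real k * (q + 1) - real c"
    using hoffman_bound_tight_if_ratio \<open>k \<ge> 2\<close> \<open>q \<le> real c - 1\<close> ratio by simp
  have "(\<Sum>i<k. \<Sum>j<k. F i j) + 2 * real k * (\<Sum>v\<in>V. S v) = 0"
    using identity tight by simp
  then have "(\<Sum>i<k. \<Sum>j<k. F i j) = 0" and "real k * (\<Sum>v\<in>V. S v) = 0"
    using F_sum S_sum by linarith+
  moreover have "real k \<noteq> 0" using \<open>k \<ge> 2\<close> by simp
  ultimately have "(\<Sum>i<k. \<Sum>j<k. F i j) = 0" and "(\<Sum>v\<in>V. S v) = 0"
    by simp_all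
  then have F_zero: "\<forall>i<k. \<forall>j<k. F i j = 0" and S_zero: "\<forall>v\<in>V. S v = 0"
    using F_nonneg S_nonneg finite_V by (simp_all add: sum_nonneg sum_nonneg_eq_0_iff)
  show "own_class_weight cl v = q * real (hdeg E v)" if "v \<in> V" for v
    using S_zero that by (simp add: S_def)
  show "?l * degree_form (\<lambda>v. X i v - X j v) = edge_form (\<lambda>v. X i v - X j v)" if "i < k" "j < k" for i j
    using F_zero that by (simp add: F_def)
qed

lemma gfun_eigenfunction_if_rayleigh_eq:
  assumes "V \<noteq> {}" and "i \<noteq> j" and "color_class V cl i \<noteq> {}"
  defines "X \<equiv> \<lambda>i. indicator (color_class V cl i) :: 'a \<Rightarrow> real"
  assumes eq: "lambda1 V E * degree_form (\<lambda>v. X i v - X j v) = edge_form (\<lambda>v. X i v - X j v)"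
  shows "is_eigenfunction V E (gfun V cl i j) (lambda1 V E)"
proof -
  have g: "gfun V cl i j = (\<lambda>v. X i v - X j v)"
    using \<open>i \<noteq> j\<close> by (auto simp: gfun_def X_def color_class_def)
  obtain v where "v \<in> color_class V cl i" using assms(3) by blast
  then have "v \<in> V \<and> gfun V cl i j v \<noteq> 0" by (simp add: gfun_def color_class_def)
  moreover have "\<forall>v\<in>V. nlap V E (gfun V cl i j) v = lambda1 V E * gfun V cl i j v"
    unfolding g using nlap_eq_if_rayleigh_minimal[OF lambda1_mult_degree_form_le[OF \<open>V \<noteq> {}\<close>] eq] by blast
  ultimately show ?thesis by (auto simp: is_eigenfunction_def)
qed

end

lemma color_class_nonempty_if_chi_qt:
  assumes tailored: "q_tailored V E q (chi_qt V E q) cl" and i: "i < chi_qt V E q"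
  shows "color_class V cl i \<noteq> {}"
proof
  assume empty: "color_class V cl i = {}"
  let ?k = "chi_qt V E q"
  define shift where "shift j = (if j < i then j else Suc j)" for j
  define cl' where "cl' v = (if cl v > i then cl v - 1 else cl v)" for v
  have col_ne: "cl v \<noteq> i" if "v \<in> V" for v
    using empty that by (auto simp: color_class_def)
  have "cl' v = j \<longleftrightarrow> cl v = shift j" if "v \<in> V" for v j
    using col_ne[OF that] by (auto simp: cl'_def shift_def)
  then have class_shift: "color_class V cl' j = color_class V cl (shift j)" for j
    by (auto simp: color_class_def)
  have "cl' v < ?k - 1" if "v \<in> V" for v
    using tailored i col_ne[OF that] that by (auto simp: cl'_def q_tailored_def is_coloring_def)
  moreover have "shift j < ?k" if "j < ?k - 1" for j
    using i that by (auto simp: shift_def)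
  ultimately have "q_tailored V E q (?k - 1) cl'"
    using tailored unfolding q_tailored_def is_coloring_def class_shift by blast
  then have "?k \<le> ?k - 1" unfolding chi_qt_def by (intro Least_le exI)
  with i show False by linarith
qed

theorem mainTheorem12:
  fixes V :: "'a set" and E :: "'a set set" and c :: nat and q :: real
  assumes "c \<ge> 2" and "0 \<le> q" and "q \<le> real c - 1"
    and "finite V" and "\<forall>e\<in>E. e \<subseteq> V \<and> card e = c"
    and "E \<noteq> {}" and "\<forall>v\<in>V. hdeg E v \<ge> 1"
    and "chi_qt V E q \<ge> 2"
    and "real (chi_qt V E q) = (real c - lambda1 V E) / (q + 1 - lambda1 V E)"
  shows "\<forall>col. q_tailored V E q (chi_qt V E q) col \<longrightarrow>
           (\<forall>i<chi_qt V E q. \<forall>v\<in>color_class V col i.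
              (\<Sum>w\<in>color_class V col i. \<bar>hadj E v w\<bar>) = q * real (hdeg E v))
         \<and> (\<forall>i<chi_qt V E q. \<forall>j<chi_qt V E q. i \<noteq> j \<longrightarrow>
              is_eigenfunction V E (gfun V col i j) (lambda1 V E))
         \<and> lambda1 V E = ((q + 1) * real (chi_qt V E q) - real c) / (real (chi_qt V E q) - 1)"
proof (intro allI impI)
  fix cl assume tailored: "q_tailored V E q (chi_qt V E q) cl"
  let ?k = "chi_qt V E q"
  interpret uniform_hypergraph V E c
    using assms(4,5,7) by unfold_locales auto
  have nonempty: "color_class V cl i \<noteq> {}" if "i < ?k" for i
    using color_class_nonempty_if_chi_qt[OF tailored that] .
  then have "V \<noteq> {}"
    using assms(8) by (force simp: color_class_def)
  note tight = tailored_coloring_tight[OF tailored \<open>V \<noteq> {}\<close> assms(8,3,9)]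
  have "\<forall>i<?k. \<forall>v\<in>color_class V cl i. (\<Sum>w\<in>color_class V cl i. \<bar>hadj E v w\<bar>) = q * real (hdeg E v)"
    using tight(2) by (auto simp: own_class_weight_def color_class_def)
  moreover have "\<forall>i<?k. \<forall>j<?k. i \<noteq> j \<longrightarrow> is_eigenfunction V E (gfun V cl i j) (lambda1 V E)"
    using gfun_eigenfunction_if_rayleigh_eq[OF \<open>V \<noteq> {}\<close> _ nonempty tight(3)] by blast
  moreover have "lambda1 V E = ((q + 1) * real ?k - real c) / (real ?k - 1)"
    using tight(1) assms(8) by (simp add: field_simps)
  ultimately show "(\<forall>i<?k. \<forall>v\<in>color_class V cl i.
              (\<Sum>w\<in>color_class V cl i. \<bar>hadj E v w\<bar>) = q * real (hdeg E v))
         \<and> (\<forall>i<?k. \<forall>j<?k. i \<noteq> j \<longrightarrow> is_eigenfunction V E (gfun V cl i j) (lambda1 V E))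
         \<and> lambda1 V E = ((q + 1) * real ?k - real c) / (real ?k - 1)"
    by blast
qed

end
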